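(* Let $X$ be a countable set and let $w$ be an essentially locally finite weight on $X$. Then the pseudo metric $\delta_w$ is discrete, i.e. $(X,\delta_w)$ is a discrete space.
   Context: A weight on $X$ is a symmetric function $w:X\times X\to[0,\infty]$ with $w(x,y)=0$ if and only if $x=y$. It is essentially locally finite if $\#\{y\in X\mid w(x,y)<R\}<\infty$ for all $x\in X$ and $R>0$. A path from $x$ to $y$ is a finite sequence $(x_0,\dots,x_n)$ of pairwise distinct elements of $X$ with $x_0=x$, $x_n=y$, and $\delta_w(x,y):=\inf\{\sum_{i=1}^n w(x_{i-1},x_i)\mid (x_0,\dots,x_n)\text{ a path from }x\text{ to }y\}$ (a pseudo metric, possibly taking the value $\infty$). *)

theory Defs
  imports "HOL-Analysis.Analysis" "HOL-Library.Extended_Nonnegative_Real"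
begin

text \<open>A weight on the set X (represented by the type 'a), values in [0,\<infinity>].\<close>
definition is_weight :: "('a \<Rightarrow> 'a \<Rightarrow> ennreal) \<Rightarrow> bool" where
  "is_weight w \<longleftrightarrow> (\<forall>x y. w x y = w y x) \<and> (\<forall>x y. w x y = 0 \<longleftrightarrow> x = y)"

definition ess_locally_finite :: "('a \<Rightarrow> 'a \<Rightarrow> ennreal) \<Rightarrow> bool" where
  "ess_locally_finite w \<longleftrightarrow> (\<forall>x. \<forall>R::real. R > 0 \<longrightarrow> finite {y. w x y < ennreal R})"

definition is_path :: "'a list \<Rightarrow> 'a \<Rightarrow> 'a \<Rightarrow> bool" where
  "is_path p x y \<longleftrightarrow> p \<noteq> [] \<and> distinct p \<and> hd p = x \<and> last p = y"

definition path_length :: "('a \<Rightarrow> 'a \<Rightarrow> ennreal) \<Rightarrow> 'a list \<Rightarrow> ennreal" where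
  "path_length w p = sum_list (map (\<lambda>(a, b). w a b) (zip p (tl p)))"

definition delta_w :: "('a \<Rightarrow> 'a \<Rightarrow> ennreal) \<Rightarrow> 'a \<Rightarrow> 'a \<Rightarrow> ennreal" where
  "delta_w w x y = (INF p \<in> {p. is_path p x y}. path_length w p)"

definition pm_open :: "('a \<Rightarrow> 'a \<Rightarrow> ennreal) \<Rightarrow> 'a set \<Rightarrow> bool" where
  "pm_open d U \<longleftrightarrow> (\<forall>x\<in>U. \<exists>\<epsilon>::real. \<epsilon> > 0 \<and> {y. d x y < ennreal \<epsilon>} \<subseteq> U)"

definition pm_discrete :: "('a \<Rightarrow> 'a \<Rightarrow> ennreal) \<Rightarrow> bool" where
  "pm_discrete d \<longleftrightarrow> (\<forall>U. pm_open d U)"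

end

theory Submission
  imports Defs
begin

text \<open>
  By essential local finiteness only finitely many points z have weight w x z < 1, and each of
  them with z \<noteq> x has positive weight; hence the weights w x z with z \<noteq> x are bounded below
  by some \<epsilon> > 0. A path from x to a point y \<noteq> x starts with such a step, so
  delta_w x y \<ge> \<epsilon>, and the delta_w-ball of radius \<epsilon> around x is {x}.
\<close>

lemma ess_locally_finite_weight_bounded_below:
  assumes "is_weight w" and "ess_locally_finite w"
  obtains \<epsilon> :: real where "\<epsilon> > 0" and "\<And>z. z \<noteq> x \<Longrightarrow> ennreal \<epsilon> \<le> w x z"
proof -
  define S where "S = {z. w x z < 1} - {x}"
  have "finite {z. w x z < 1}"
    using assms(2) unfolding ess_locally_finite_def by (metis ennreal_1 zero_less_one)
  then have "finite S"
    unfolding S_def by simp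
  define m where "m = Min (insert 1 (w x ` S))"
  have m_le: "m \<le> 1" "\<And>z. z \<in> S \<Longrightarrow> m \<le> w x z"
    unfolding m_def using \<open>finite S\<close> by (auto intro: Min_le)
  have "w x z > 0" if "z \<in> S" for z
    using that assms(1) unfolding S_def is_weight_def by (auto simp: zero_less_iff_neq_zero)
  then have "m > 0"
    unfolding m_def using \<open>finite S\<close> by (subst Min_gr_iff) auto
  have "m < top"
    using m_le(1) by (metis ennreal_1 ennreal_less_top le_less_trans)
  then have m_eq: "ennreal (enn2real m) = m"
    by simp
  show ?thesis
  proof
    show "enn2real m > 0"
      using \<open>m > 0\<close> \<open>m < top\<close> by (simp add: enn2real_positive_iff)
  next
    fix z assume "z \<noteq> x"
    show "ennreal (enn2real m) \<le> w x z"
      unfolding m_eq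
    proof (cases "z \<in> S")
      case True
      then show "m \<le> w x z" by (rule m_le(2))
    next
      case False
      then have "1 \<le> w x z" using \<open>z \<noteq> x\<close> unfolding S_def by (simp add: not_less)
      with m_le(1) show "m \<le> w x z" by (rule order_trans)
    qed
  qed
qed

lemma path_length_Cons_Cons_ge: "w a b \<le> path_length w (a # b # p)"
  unfolding path_length_def by simp

lemma path_length_ge_first_step:
  assumes "is_path p x y" and "y \<noteq> x"
  obtains z where "z \<noteq> x" and "w x z \<le> path_length w p"
proof -
  obtain q where p: "p = x # q"
    using assms(1) unfolding is_path_def by (cases p) auto
  have "q \<noteq> []"
    using assms unfolding is_path_def p by auto
  then obtain z r where q: "q = z # r"
    by (meson neq_Nil_conv)
  have "z \<noteq> x"
    using assms(1) unfolding is_path_def p q by auto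
  moreover have "w x z \<le> path_length w p"
    unfolding p q by (rule path_length_Cons_Cons_ge)
  ultimately show ?thesis
    by (rule that)
qed

lemma delta_w_ge_if_weights_ge:
  assumes "y \<noteq> x" and "\<And>z. z \<noteq> x \<Longrightarrow> e \<le> w x z"
  shows "e \<le> delta_w w x y"
  unfolding delta_w_def
proof (rule INF_greatest)
  fix p assume "p \<in> {p. is_path p x y}"
  then have "is_path p x y" by simp
  then obtain z where "z \<noteq> x" and "w x z \<le> path_length w p"
    using assms(1) by (rule path_length_ge_first_step)
  with assms(2) show "e \<le> path_length w p"
    by (blast intro: order_trans)
qed

lemma pm_discreteI:
  assumes "\<And>x. \<exists>\<epsilon>::real. \<epsilon> > 0 \<and> {y. d x y < ennreal \<epsilon>} \<subseteq> {x}"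
  shows "pm_discrete d"
  unfolding pm_discrete_def pm_open_def
proof (intro allI ballI)
  fix U :: "'a set" and x :: 'a
  assume "x \<in> U"
  obtain \<epsilon> :: real where "\<epsilon> > 0" and "{y. d x y < ennreal \<epsilon>} \<subseteq> {x}"
    using assms by blast
  with \<open>x \<in> U\<close> show "\<exists>\<epsilon>::real. \<epsilon> > 0 \<and> {y. d x y < ennreal \<epsilon>} \<subseteq> U"
    by blast
qed

theorem lemma2p2:
  fixes w :: "'a \<Rightarrow> 'a \<Rightarrow> ennreal"
  assumes "countable (UNIV :: 'a set)"
    and "is_weight w"
    and "ess_locally_finite w"
  shows "pm_discrete (delta_w w)"
proof (rule pm_discreteI)
  fix x
  obtain \<epsilon> :: real where "\<epsilon> > 0" and \<epsilon>: "\<And>z. z \<noteq> x \<Longrightarrow> ennreal \<epsilon> \<le> w x z"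
    using ess_locally_finite_weight_bounded_below[OF assms(2,3), where x = x] by blast
  have "{y. delta_w w x y < ennreal \<epsilon>} \<subseteq> {x}"
    using delta_w_ge_if_weights_ge[of _ x "ennreal \<epsilon>" w] \<epsilon> by (auto simp: not_less[symmetric])
  with \<open>\<epsilon> > 0\<close> show "\<exists>\<epsilon>::real. \<epsilon> > 0 \<and> {y. delta_w w x y < ennreal \<epsilon>} \<subseteq> {x}"
    by blast
qed

end
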